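(* $\chi_i'(S_{C_4}^1)=2$ and $\chi_i'(S_{C_4}^n)=3$ for every integer $n\ge 2$, where $C_4$ is the cycle on $4$ vertices.
   Context: For a graph $H$ with at least one edge, an injective edge $k$-coloring is a map $c:E(H)\to\{1,\dots,k\}$ such that whenever $e_1=xy$, $e_2=yz$, $e_3=zu$ are edges of $H$ with $x,y,z$ distinct and $u\notin\{y,z\}$ (the case $u=x$ being allowed), we have $c(e_1)\ne c(e_3)$. The injective chromatic index $\chi_i'(H)$ is the least $k$ for which such a coloring exists. For a graph $G$ and positive integer $n$, the generalized Sierpiński graph $S_G^n$ has vertex set $V(G)^n$, and $(u_1,\dots,u_n)$, $(v_1,\dots,v_n)$ are adjacent if and only if there is $d\in\{1,\dots,n\}$ with $u_i=v_i$ for $i<d$, $u_dv_d\in E(G)$, and $u_i=v_d$, $v_i=u_d$ for all $i>d$. *)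

theory Defs
  imports Main
begin

text \<open>A simple graph is given by a vertex set V and a symmetric adjacency relation adj
  (only used on V). Edges are unordered pairs {x,y}.\<close>

definition graph_edges :: "'a set \<Rightarrow> ('a \<Rightarrow> 'a \<Rightarrow> bool) \<Rightarrow> 'a set set" where
  "graph_edges V adj = {{x, y} | x y. x \<in> V \<and> y \<in> V \<and> adj x y}"

definition inj_edge_coloring ::
  "'a set \<Rightarrow> ('a \<Rightarrow> 'a \<Rightarrow> bool) \<Rightarrow> nat \<Rightarrow> ('a set \<Rightarrow> nat) \<Rightarrow> bool" where
  "inj_edge_coloring V adj k c \<longleftrightarrow>
     (\<forall>e \<in> graph_edges V adj. c e \<in> {1..k}) \<and>
     (\<forall>x y z u. x \<in> V \<and> y \<in> V \<and> z \<in> V \<and> u \<in> V \<and>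
        adj x y \<and> adj y z \<and> adj z u \<and>
        x \<noteq> y \<and> y \<noteq> z \<and> x \<noteq> z \<and> u \<noteq> y \<and> u \<noteq> z
        \<longrightarrow> c {x, y} \<noteq> c {z, u})"

definition inj_chromatic_index :: "'a set \<Rightarrow> ('a \<Rightarrow> 'a \<Rightarrow> bool) \<Rightarrow> nat" where
  "inj_chromatic_index V adj = (LEAST k. \<exists>c. inj_edge_coloring V adj k c)"

definition sierp_verts :: "'a set \<Rightarrow> nat \<Rightarrow> 'a list set" where
  "sierp_verts V n = {w. length w = n \<and> set w \<subseteq> V}"

definition sierp_adj :: "('a \<Rightarrow> 'a \<Rightarrow> bool) \<Rightarrow> nat \<Rightarrow> 'a list \<Rightarrow> 'a list \<Rightarrow> bool" where
  "sierp_adj adj n u v \<longleftrightarrow> length u = n \<and> length v = n \<and>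
     (\<exists>d < n. (\<forall>i < d. u ! i = v ! i) \<and> adj (u ! d) (v ! d) \<and>
        (\<forall>i. d < i \<and> i < n \<longrightarrow> u ! i = v ! d \<and> v ! i = u ! d))"

definition C4_verts :: "nat set" where
  "C4_verts = {0..<4}"

definition C4_adj :: "nat \<Rightarrow> nat \<Rightarrow> bool" where
  "C4_adj a b \<longleftrightarrow> a < 4 \<and> b < 4 \<and> (b = (a + 1) mod 4 \<or> a = (b + 1) mod 4)"

end

theory Submission
  imports Defs
begin

(* Every edge of S_{C4}^n has the form {w a b^k, w b a^k} with ab an edge of C4.  Colour C4
   with 1 and 2 so that opposite edges differ.  In S_{C4}^n give colour 3 to the edges with
   k >= 2, the C4-colour of ab to those with k = 1, and to an edge inside the copy of C4 with
   address w (k = 0) its C4-colour, except colour 3 when it contains the last letter of w and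
   that letter is odd.  After stripping the common prefix of a path x y z u, either all four
   vertices lie in one copy of C4 or one of the three edges is a top-level bridge, and the
   few possible shapes of such a path show that its first and last edges get different
   colours; for n = 1 only colours 1 and 2 occur.  Conversely, two opposite edges of C4
   conflict, and S_{C4}^2 -- hence every S_{C4}^n, which contains a copy of it -- has five
   edges conflicting along an odd cycle. *)

lemma inj_edge_coloringI:
  assumes "\<And>x y. x \<in> V \<Longrightarrow> y \<in> V \<Longrightarrow> adj x y \<Longrightarrow> c {x, y} \<in> {1..k}"
    and "\<And>x y z u. x \<in> V \<Longrightarrow> y \<in> V \<Longrightarrow> z \<in> V \<Longrightarrow> u \<in> V \<Longrightarrow>
      adj x y \<Longrightarrow> adj y z \<Longrightarrow> adj z u \<Longrightarrow>
      x \<noteq> y \<Longrightarrow> y \<noteq> z \<Longrightarrow> x \<noteq> z \<Longrightarrow> u \<noteq> y \<Longrightarrow> u \<noteq> z \<Longrightarrow> c {x, y} \<noteq> c {z, u}"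
  shows "inj_edge_coloring V adj k c"
  using assms unfolding inj_edge_coloring_def graph_edges_def by blast

lemma inj_edge_coloringD_range:
  "inj_edge_coloring V adj k c \<Longrightarrow> x \<in> V \<Longrightarrow> y \<in> V \<Longrightarrow> adj x y \<Longrightarrow> c {x, y} \<in> {1..k}"
  unfolding inj_edge_coloring_def graph_edges_def by blast

lemma inj_edge_coloringD_conflict:
  "inj_edge_coloring V adj k c \<Longrightarrow> x \<in> V \<Longrightarrow> y \<in> V \<Longrightarrow> z \<in> V \<Longrightarrow> u \<in> V \<Longrightarrow>
    adj x y \<Longrightarrow> adj y z \<Longrightarrow> adj z u \<Longrightarrow>
    x \<noteq> y \<Longrightarrow> y \<noteq> z \<Longrightarrow> x \<noteq> z \<Longrightarrow> u \<noteq> y \<Longrightarrow> u \<noteq> z \<Longrightarrow> c {x, y} \<noteq> c {z, u}"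
  unfolding inj_edge_coloring_def by blast

lemma inj_chromatic_index_eqI:
  assumes "inj_edge_coloring V adj k c"
    and "\<And>k' c'. inj_edge_coloring V adj k' c' \<Longrightarrow> k \<le> k'"
  shows "inj_chromatic_index V adj = k"
  unfolding inj_chromatic_index_def using assms by (blast intro: Least_equality)

lemma replicate_eq_iff_nth: "u = replicate n c \<longleftrightarrow> length u = n \<and> (\<forall>i<n. u ! i = c)"
  by (metis in_set_conv_nth length_replicate replicate_eqI nth_replicate)

lemma sierp_adj_length: "sierp_adj adj n u v \<Longrightarrow> length u = n \<and> length v = n"
  by (simp add: sierp_adj_def)

lemma sierp_adj_0 [simp]: "\<not> sierp_adj adj 0 u v"
  by (simp add: sierp_adj_def)

lemma sierp_adj_Cons:
  "sierp_adj adj (Suc n) (c # u) (c' # v) \<longleftrightarrow>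
     (c = c' \<and> sierp_adj adj n u v) \<or> (adj c c' \<and> u = replicate n c' \<and> v = replicate n c)"
proof -
  have tail: "(\<forall>i. Suc d < i \<and> i < Suc n \<longrightarrow> P i) \<longleftrightarrow> (\<forall>i. d < i \<and> i < n \<longrightarrow> P (Suc i))"
    for d and P :: "nat \<Rightarrow> bool"
    by (metis Suc_less_eq less_Suc_eq_0_disj not_less_zero)
  have head: "(\<forall>i. 0 < i \<and> i < Suc n \<longrightarrow> P i) \<longleftrightarrow> (\<forall>i<n. P (Suc i))" for P :: "nat \<Rightarrow> bool"
    by (metis Suc_less_eq gr0_implies_Suc zero_less_Suc)
  show ?thesis
    unfolding sierp_adj_def Ex_less_Suc2 All_less_Suc2 tail head replicate_eq_iff_nth
    by auto
qed

lemma sierp_adj_SucE: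
  assumes "sierp_adj adj (Suc n) u v"
  obtains (inner) c u' v' where "u = c # u'" "v = c # v'" "sierp_adj adj n u' v'"
    | (bridge) c d where "adj c d" "u = c # replicate n d" "v = d # replicate n c"
proof -
  have "u \<noteq> []" "v \<noteq> []" using sierp_adj_length[OF assms] by auto
  then obtain c u' d v' where "u = c # u'" "v = d # v'" by (meson neq_Nil_conv)
  with assms that show thesis by (auto simp: sierp_adj_Cons)
qed

lemma sierp_adj_sym:
  assumes "symp adj" "sierp_adj adj n u v"
  shows "sierp_adj adj n v u"
  using assms(2)
proof (induction n arbitrary: u v)
  case (Suc n)
  from Suc.prems show ?case
    by (cases rule: sierp_adj_SucE) (use Suc.IH assms(1) in \<open>auto simp: sierp_adj_Cons symp_def\<close>)
qed simp

lemma sierp_adj_append: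
  "sierp_adj adj n u v \<Longrightarrow> sierp_adj adj (length w + n) (w @ u) (w @ v)"
  by (induction w) (auto simp: sierp_adj_Cons)

lemma sierp_adj_replicateD:
  "sierp_adj adj (Suc m) (replicate (Suc m) a) v \<Longrightarrow> \<exists>s. adj a s \<and> v = replicate m a @ [s]"
proof (induction m arbitrary: v)
  case 0
  then show ?case by (cases rule: sierp_adj_SucE) auto
next
  case (Suc m)
  from Suc.prems show ?case
  proof (cases rule: sierp_adj_SucE)
    case (inner c u' v')
    then show ?thesis using Suc.IH by fastforce
  next
    case (bridge c d)
    then show ?thesis by (metis replicate_Suc replicate_append_same list.inject)
  qed
qed

lemma sierp_adj_replicate_snocD:
  "sierp_adj adj (Suc m) (replicate m a @ [s]) v \<Longrightarrow>
     (\<exists>s'. adj s s' \<and> v = replicate m a @ [s']) \<or> (\<exists>k. m = Suc k \<and> v = replicate k a @ [s, a])"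
proof (induction m arbitrary: v)
  case 0
  then show ?case by (cases rule: sierp_adj_SucE) auto
next
  case (Suc m)
  from Suc.prems show ?case
  proof (cases rule: sierp_adj_SucE)
    case (inner c u' v')
    then show ?thesis using Suc.IH by (cases m) auto
  next
    case (bridge c d)
    then have "c = a" "replicate m a @ [s] = replicate m d @ [d]"
      by (auto simp: replicate_append_same)
    then have "c = a" "s = d" "replicate m a = replicate m d" by auto
    then show ?thesis using bridge
      by (cases m) (auto simp: replicate_append_same)
  qed
qed

lemma sierp_adj_1: "sierp_adj adj 1 u v \<longleftrightarrow> (\<exists>a b. adj a b \<and> u = [a] \<and> v = [b])"
  by (auto simp: sierp_adj_def length_Suc_conv)

lemma sierp_adj_2: "sierp_adj adj 2 [a, b] [c, d] \<longleftrightarrow> (a = c \<and> adj b d) \<or> (adj a c \<and> b = c \<and> d = a)"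
  by (simp add: numeral_2_eq_2 sierp_adj_Cons)

lemma sierp_adj_Suc_path_cases:
  assumes "sierp_adj adj (Suc n) x y" "sierp_adj adj (Suc n) y z" "sierp_adj adj (Suc n) z u"
  obtains (inner) c x' y' z' u' where "x = c # x'" "y = c # y'" "z = c # z'" "u = c # u'"
      "sierp_adj adj n x' y'" "sierp_adj adj n y' z'" "sierp_adj adj n z' u'"
    | (bridge_first) a b where "adj a b" "x = a # replicate n b" "y = b # replicate n a"
    | (bridge_middle) a b where "adj a b" "y = a # replicate n b" "z = b # replicate n a"
    | (bridge_last) a b where "adj a b" "z = a # replicate n b" "u = b # replicate n a"
  using assms by (elim sierp_adj_SucE) (blast intro: that)+

lemma sierp_adj_bridge_endD:
  assumes "sierp_adj adj (Suc (Suc m)) (b # replicate (Suc m) a) z" "z \<noteq> a # replicate (Suc m) b"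
  shows "\<exists>s. adj a s \<and> z = b # replicate m a @ [s]"
  using assms(1)
proof (cases rule: sierp_adj_SucE)
  case (inner c u' v')
  then show ?thesis using sierp_adj_replicateD by fastforce
next
  case (bridge c d)
  with assms(2) show ?thesis by simp
qed

lemma sierp_adj_two_steps_from_bridge:
  assumes irrefl: "irreflp adj" and no_triangle: "\<And>x y z. adj x y \<Longrightarrow> adj y z \<Longrightarrow> \<not> adj x z"
    and ab: "adj a b"
    and yz: "sierp_adj adj (Suc (Suc m)) (b # replicate (Suc m) a) z" "z \<noteq> a # replicate (Suc m) b"
    and zu: "sierp_adj adj (Suc (Suc m)) z u" "u \<noteq> b # replicate (Suc m) a"
  obtains (end_edge) s s' where "adj a s" "adj s s'" "s' \<noteq> a"
      "z = b # replicate m a @ [s]" "u = b # replicate m a @ [s']"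
    | (turn) s k where "adj a s" "m = Suc k"
      "z = b # replicate m a @ [s]" "u = b # replicate k a @ [s, a]"
proof -
  obtain s where as: "adj a s" and z: "z = b # replicate m a @ [s]"
    using sierp_adj_bridge_endD[OF yz] by blast
  from zu(1) show thesis
  proof (cases rule: sierp_adj_SucE)
    case (inner c z' u')
    with z have u': "u = b # u'" and "sierp_adj adj (Suc m) (replicate m a @ [s]) u'" by auto
    from sierp_adj_replicate_snocD[OF this(2)] show thesis
    proof (elim disjE exE conjE)
      fix s' assume ss': "adj s s'" "u' = replicate m a @ [s']"
      moreover have "s' \<noteq> a" using zu(2) ss'(2) u' by (auto simp: replicate_append_same)
      ultimately show thesis using end_edge[OF as _ _ z] u' by blast
    next
      fix k assume "m = Suc k" "u' = replicate k a @ [s, a]"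
      then show thesis using turn[OF as _ z] u' by blast
    qed
  next
    case (bridge c d)
    with z have "c = b" "replicate m a @ [s] = replicate m d @ [d]"
      by (auto simp: replicate_append_same)
    then have "adj b s" "m = 0 \<or> a = s" using bridge(1) by (auto simp: replicate_eq_replicate)
    then show thesis
      using no_triangle[OF ab] as irrefl by (auto simp: irreflp_def)
  qed
qed

lemma inj_edge_coloring_sierp_copy:
  assumes "inj_edge_coloring (sierp_verts V (length w + n)) (sierp_adj adj (length w + n)) k c"
    and "set w \<subseteq> V"
  shows "inj_edge_coloring (sierp_verts V n) (sierp_adj adj n) k (\<lambda>e. c ((@) w ` e))"
proof (rule inj_edge_coloringI)
  have V: "w @ x \<in> sierp_verts V (length w + n)" if "x \<in> sierp_verts V n" for x
    using that assms(2) by (auto simp: sierp_verts_def)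
  show "c ((@) w ` {x, y}) \<in> {1..k}"
    if "x \<in> sierp_verts V n" "y \<in> sierp_verts V n" "sierp_adj adj n x y" for x y
    using inj_edge_coloringD_range[OF assms(1) V V sierp_adj_append] that by simp
  show "c ((@) w ` {x, y}) \<noteq> c ((@) w ` {z, u})"
    if "x \<in> sierp_verts V n" "y \<in> sierp_verts V n" "z \<in> sierp_verts V n" "u \<in> sierp_verts V n"
      "sierp_adj adj n x y" "sierp_adj adj n y z" "sierp_adj adj n z u"
      "x \<noteq> y" "y \<noteq> z" "x \<noteq> z" "u \<noteq> y" "u \<noteq> z" for x y z u
    using inj_edge_coloringD_conflict[OF assms(1) V V V V
        sierp_adj_append sierp_adj_append sierp_adj_append] that
    by simp
qed

lemma C4_adjE:
  assumes "C4_adj a b"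
  obtains "a = 0" "b = 1" | "a = 1" "b = 0" | "a = 1" "b = 2" | "a = 2" "b = 1"
    | "a = 2" "b = 3" | "a = 3" "b = 2" | "a = 3" "b = 0" | "a = 0" "b = 3"
proof -
  have "a < 4" "b < 4" using assms by (auto simp: C4_adj_def)
  then have "a \<in> {0, 1, 2, 3}" "b \<in> {0, 1, 2, 3}" by auto
  then show thesis using assms that by (auto simp: C4_adj_def)
qed

lemma C4_adj_irrefl: "irreflp C4_adj"
  by (auto simp: irreflp_def elim: C4_adjE)

lemma C4_adj_sym: "symp C4_adj"
  by (auto simp: symp_def C4_adj_def)

lemma C4_no_triangle: "C4_adj a b \<Longrightarrow> C4_adj b c \<Longrightarrow> \<not> C4_adj a c"
  by (elim C4_adjE) (auto simp: C4_adj_def)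

(* Every edge of C4 joins an even and an odd vertex; this picks the odd one. *)
definition odd_end :: "nat \<Rightarrow> nat \<Rightarrow> nat" where
  "odd_end a b = (if odd a then a else b)"

lemma odd_end_commute: "C4_adj a b \<Longrightarrow> odd_end a b = odd_end b a"
  by (elim C4_adjE) (simp_all add: odd_end_def)

definition C4_colour :: "nat \<Rightarrow> nat \<Rightarrow> nat" where
  "C4_colour a b = (if a = 1 \<or> b = 1 then 1 else 2)"

definition copy_colour :: "nat option \<Rightarrow> nat \<Rightarrow> nat \<Rightarrow> nat" where
  "copy_colour p a b = (if p = Some (odd_end a b) then 3 else C4_colour a b)"

lemma copy_colour_path_distinct:
  "C4_adj a b \<Longrightarrow> C4_adj b c \<Longrightarrow> C4_adj c d \<Longrightarrow> a \<noteq> c \<Longrightarrow> d \<noteq> b \<Longrightarrow>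
     copy_colour p a b \<noteq> copy_colour p c d"
  by (elim C4_adjE) (auto simp: copy_colour_def C4_colour_def odd_end_def)

lemma C4_colour_ne_copy_colour:
  "C4_adj a b \<Longrightarrow> C4_adj a s \<Longrightarrow> C4_adj s s' \<Longrightarrow> s' \<noteq> a \<Longrightarrow>
     C4_colour a b \<noteq> copy_colour (Some b) s s'"
  by (elim C4_adjE) (auto simp: copy_colour_def C4_colour_def odd_end_def)

lemma copy_colour_ne_3:
  "C4_adj a s \<Longrightarrow> C4_adj s s' \<Longrightarrow> s' \<noteq> a \<Longrightarrow> copy_colour (Some a) s s' \<noteq> 3"
  by (elim C4_adjE) (auto simp: copy_colour_def C4_colour_def odd_end_def)

lemma copy_colour_across_bridge:
  "C4_adj a b \<Longrightarrow> C4_adj b s \<Longrightarrow> C4_adj a s' \<Longrightarrow> (p, q) \<in> {(a, b), (b, a)} \<Longrightarrow>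
     copy_colour (Some p) s b \<noteq> copy_colour (Some q) a s'"
  by (elim C4_adjE) (auto simp: copy_colour_def C4_colour_def odd_end_def)

(* p is the letter preceding the first position where the two words differ, i.e. the last
   letter of the address of the copy of C4 containing the edge (None at the top level). *)
fun sierp_colour :: "nat option \<Rightarrow> nat list \<Rightarrow> nat list \<Rightarrow> nat" where
  "sierp_colour p (a # u) (b # v) =
     (if a = b then sierp_colour (Some a) u v
      else if 2 \<le> length u then 3
      else if length u = 1 then C4_colour a b
      else copy_colour p a b)"
| "sierp_colour p _ _ = 0"

lemma sierp_colour_append:
  "sierp_colour p (w @ u) (w @ v) = sierp_colour (if w = [] then p else Some (last w)) u v"
proof (induction w arbitrary: p)
  case (Cons a w)
  then show ?case by (cases w) simp_all
qed simp

lemma copy_colour_commute: "C4_adj a b \<Longrightarrow> copy_colour p a b = copy_colour p b a"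
  using odd_end_commute[of a b] by (simp add: copy_colour_def C4_colour_def disj_commute)

lemma sierp_colour_bridge:
  "a \<noteq> b \<Longrightarrow> sierp_colour p (a # replicate n b) (b # replicate n a) =
     (if 2 \<le> n then 3 else if n = 1 then C4_colour a b else copy_colour p a b)"
  by simp

lemma sierp_colour_sym:
  "sierp_adj C4_adj n u v \<Longrightarrow> sierp_colour p u v = sierp_colour p v u"
proof (induction n arbitrary: p u v)
  case (Suc n)
  from Suc.prems show ?case
  proof (cases rule: sierp_adj_SucE)
    case (bridge c d)
    moreover have "c \<noteq> d" using bridge(1) C4_adj_irrefl by (auto simp: irreflp_def)
    moreover have "C4_colour c d = C4_colour d c" by (auto simp: C4_colour_def)
    ultimately show ?thesis using copy_colour_commute[OF bridge(1)] by simp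
  next
    case (inner c u' v')
    then show ?thesis using Suc.IH[of u' v' "Some c"] by simp
  qed
qed simp

lemma sierp_colour_range:
  "sierp_adj C4_adj n u v \<Longrightarrow> sierp_colour p u v \<in> {1, 2, 3}"
proof (induction n arbitrary: p u v)
  case (Suc n)
  from Suc.prems show ?case
  proof (cases rule: sierp_adj_SucE)
    case (bridge c d)
    moreover have "c \<noteq> d" using bridge(1) C4_adj_irrefl by (auto simp: irreflp_def)
    ultimately show ?thesis
      by (simp only: sierp_colour_bridge) (simp add: copy_colour_def C4_colour_def)
  qed (simp add: Suc.IH[simplified])
qed simp

lemma sierp_colour_range_1:
  assumes "sierp_adj C4_adj 1 u v"
  shows "sierp_colour None u v \<in> {1, 2}"
  using assms[unfolded One_nat_def] C4_adj_irrefl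
  by (cases rule: sierp_adj_SucE) (auto simp: irreflp_def copy_colour_def C4_colour_def)

lemma sierp_colour_bridge_first:
  assumes ab: "C4_adj a b"
    and yz: "sierp_adj C4_adj (Suc (Suc m)) (b # replicate (Suc m) a) z" "z \<noteq> a # replicate (Suc m) b"
    and zu: "sierp_adj C4_adj (Suc (Suc m)) z u" "u \<noteq> b # replicate (Suc m) a"
  shows "sierp_colour p (a # replicate (Suc m) b) (b # replicate (Suc m) a) \<noteq> sierp_colour p z u"
proof -
  have "a \<noteq> b" using ab C4_adj_irrefl by (auto simp: irreflp_def)
  then have xy: "sierp_colour p (a # replicate (Suc m) b) (b # replicate (Suc m) a) =
      (if m = 0 then C4_colour a b else 3)" by simp
  show ?thesis
  proof (rule sierp_adj_two_steps_from_bridge[OF C4_adj_irrefl C4_no_triangle ab yz zu])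
    fix s s'
    assume as: "C4_adj a s" and ss': "C4_adj s s'" "s' \<noteq> a"
      and z: "z = b # replicate m a @ [s]" and u: "u = b # replicate m a @ [s']"
    have "s \<noteq> s'" using ss'(1) C4_adj_irrefl by (auto simp: irreflp_def)
    then have "sierp_colour p z u = copy_colour (Some (if m = 0 then b else a)) s s'"
      using sierp_colour_append[of p "b # replicate m a" "[s]" "[s']"] z u by simp
    then show ?thesis
      using xy C4_colour_ne_copy_colour[OF ab as ss'] copy_colour_ne_3[OF as ss'] by auto
  next
    fix s k
    assume as: "C4_adj a s" and m: "m = Suc k"
      and z: "z = b # replicate m a @ [s]" and u: "u = b # replicate k a @ [s, a]"
    have "a \<noteq> s" using as C4_adj_irrefl by (auto simp: irreflp_def)
    then have "sierp_colour p z u = C4_colour a s"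
      using sierp_colour_append[of p "b # replicate k a" "[a, s]" "[s, a]"] z u m
      by (simp add: replicate_append_same[symmetric])
    then show ?thesis using xy m by (simp add: C4_colour_def)
  qed
qed

lemma sierp_colour_bridge_middle:
  assumes ab: "C4_adj a b"
    and xy: "sierp_adj C4_adj (Suc (Suc m)) x (a # replicate (Suc m) b)" "x \<noteq> b # replicate (Suc m) a"
    and zu: "sierp_adj C4_adj (Suc (Suc m)) (b # replicate (Suc m) a) u" "u \<noteq> a # replicate (Suc m) b"
  shows "sierp_colour p x (a # replicate (Suc m) b) \<noteq> sierp_colour p (b # replicate (Suc m) a) u"
proof -
  obtain s where bs: "C4_adj b s" and x: "x = a # replicate m b @ [s]"
    using sierp_adj_bridge_endD[OF sierp_adj_sym[OF C4_adj_sym xy(1)] xy(2)] by blast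
  obtain s' where as': "C4_adj a s'" and u: "u = b # replicate m a @ [s']"
    using sierp_adj_bridge_endD[OF zu] by blast
  have "s \<noteq> b" "a \<noteq> s'" using bs as' C4_adj_irrefl by (auto simp: irreflp_def)
  then have
    "sierp_colour p x (a # replicate (Suc m) b) = copy_colour (Some (if m = 0 then a else b)) s b"
    "sierp_colour p (b # replicate (Suc m) a) u = copy_colour (Some (if m = 0 then b else a)) a s'"
    using sierp_colour_append[of p "a # replicate m b" "[s]" "[b]"]
      sierp_colour_append[of p "b # replicate m a" "[a]" "[s']"] x u
    by (simp_all add: replicate_append_same[symmetric])
  then show ?thesis using copy_colour_across_bridge[OF ab bs as'] by auto
qed

lemma sierp_colour_path_distinct:
  assumes "sierp_adj C4_adj n x y" "sierp_adj C4_adj n y z" "sierp_adj C4_adj n z u"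
    and "x \<noteq> z" "u \<noteq> y"
  shows "sierp_colour p x y \<noteq> sierp_colour p z u"
  using assms
proof (induction n arbitrary: p x y z u)
  case (Suc n)
  show ?case
  proof (cases n)
    case 0
    with Suc.prems(1-3) obtain a b c d where "C4_adj a b" "C4_adj b c" "C4_adj c d"
      "x = [a]" "y = [b]" "z = [c]" "u = [d]"
      by (auto simp: sierp_adj_1[unfolded One_nat_def])
    then show ?thesis using Suc.prems(4,5) copy_colour_path_distinct C4_adj_irrefl
      by (auto simp: irreflp_def)
  next
    fix m assume n: "n = Suc m"
    from Suc.prems(1-3) show ?thesis
    proof (cases rule: sierp_adj_Suc_path_cases)
      case (inner c x' y' z' u')
      then show ?thesis using Suc.IH[of x' y' z' u' "Some c"] Suc.prems(4,5) by simp
    next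
      case (bridge_first a b)
      then show ?thesis using sierp_colour_bridge_first n Suc.prems by simp
    next
      case (bridge_middle a b)
      then show ?thesis using sierp_colour_bridge_middle n Suc.prems by simp
    next
      case (bridge_last a b)
      have "sierp_colour p u z \<noteq> sierp_colour p y x"
        using sierp_colour_bridge_first[of b a m y x p] bridge_last n Suc.prems
          sierp_adj_sym[OF C4_adj_sym] C4_adj_sym by (auto simp: symp_def)
      then show ?thesis
        using sierp_colour_sym Suc.prems(1,3) by metis
    qed
  qed
qed simp

definition sierp_edge_colour :: "nat list set \<Rightarrow> nat" where
  "sierp_edge_colour e = (let (x, y) = (SOME (x, y). e = {x, y}) in sierp_colour None x y)"

lemma sierp_edge_colour_eq:
  assumes "sierp_adj C4_adj n x y"
  shows "sierp_edge_colour {x, y} = sierp_colour None x y"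
  unfolding sierp_edge_colour_def Let_def
proof (rule someI2[of _ "(x, y)"])
  show "\<And>p. (case p of (a, b) \<Rightarrow> {x, y} = {a, b}) \<Longrightarrow>
      (case p of (a, b) \<Rightarrow> sierp_colour None a b) = sierp_colour None x y"
    using sierp_colour_sym[OF assms] by (auto simp: doubleton_eq_iff)
qed simp

lemma sierp_edge_colour_inj_edge_coloring:
  "inj_edge_coloring (sierp_verts C4_verts n) (sierp_adj C4_adj n) (if n = 1 then 2 else 3)
     sierp_edge_colour"
proof (rule inj_edge_coloringI)
  fix x y assume "sierp_adj C4_adj n x y"
  then show "sierp_edge_colour {x, y} \<in> {1..(if n = 1 then 2 else 3)}"
    using sierp_colour_range[of n x y None] sierp_colour_range_1[of x y]
    by (auto simp: sierp_edge_colour_eq)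
next
  fix x y z u
  assume "sierp_adj C4_adj n x y" "sierp_adj C4_adj n y z" "sierp_adj C4_adj n z u"
    "x \<noteq> z" "u \<noteq> y"
  then show "sierp_edge_colour {x, y} \<noteq> sierp_edge_colour {z, u}"
    by (simp add: sierp_edge_colour_eq sierp_colour_path_distinct)
qed

lemma inj_edge_coloring_sierp_1_ge_2:
  assumes "inj_edge_coloring (sierp_verts C4_verts 1) (sierp_adj C4_adj 1) k c"
  shows "2 \<le> k"
proof -
  have "c {[0], [1]} \<noteq> c {[2], [3]}"
    by (rule inj_edge_coloringD_conflict[OF assms, of _ "[1]" "[2]"])
      (simp_all add: sierp_adj_Cons C4_adj_def sierp_verts_def C4_verts_def)
  moreover have "c {[0], [1]} \<in> {1..k}" "c {[2], [3]} \<in> {1..k}"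
    by (rule inj_edge_coloringD_range[OF assms];
        simp add: sierp_adj_Cons C4_adj_def sierp_verts_def C4_verts_def)+
  ultimately show ?thesis by auto
qed

lemma inj_edge_coloring_sierp_2_ge_3:
  assumes "inj_edge_coloring (sierp_verts C4_verts 2) (sierp_adj C4_adj 2) k c"
  shows "3 \<le> k"
proof -
  note simps = sierp_adj_2 C4_adj_def sierp_verts_def C4_verts_def
  (* five edges conflicting cyclically: an odd cycle, which two colours cannot colour *)
  have conflicts:
    "c {[1, 2], [1, 1]} \<noteq> c {[1, 0], [0, 1]}" "c {[1, 2], [1, 1]} \<noteq> c {[1, 0], [1, 3]}"
    "c {[0, 2], [0, 1]} \<noteq> c {[1, 0], [1, 3]}" "c {[0, 0], [0, 3]} \<noteq> c {[0, 2], [0, 1]}"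
    "c {[0, 3], [0, 0]} \<noteq> c {[0, 1], [1, 0]}"
    by (rule inj_edge_coloringD_conflict[OF assms]; simp add: simps)+
  have "c {[1, 2], [1, 1]} \<in> {1..k}" "c {[1, 0], [0, 1]} \<in> {1..k}" "c {[1, 0], [1, 3]} \<in> {1..k}"
    "c {[0, 2], [0, 1]} \<in> {1..k}" "c {[0, 0], [0, 3]} \<in> {1..k}"
    by (rule inj_edge_coloringD_range[OF assms]; simp add: simps)+
  with conflicts show ?thesis
    by (auto simp: insert_commute)
qed

lemma inj_edge_coloring_sierp_ge_3:
  assumes "2 \<le> n" "inj_edge_coloring (sierp_verts C4_verts n) (sierp_adj C4_adj n) k c"
  shows "3 \<le> k"
proof -
  define w where "w = replicate (n - 2) (0::nat)"
  have "length w + 2 = n" "set w \<subseteq> C4_verts"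
    using assms(1) by (auto simp: w_def C4_verts_def)
  with assms(2) inj_edge_coloring_sierp_copy[where w = w and n = 2]
  have "inj_edge_coloring (sierp_verts C4_verts 2) (sierp_adj C4_adj 2) k (\<lambda>e. c ((@) w ` e))"
    by simp
  then show ?thesis by (rule inj_edge_coloring_sierp_2_ge_3)
qed

theorem mainTheorem7:
  shows "inj_chromatic_index (sierp_verts C4_verts 1) (sierp_adj C4_adj 1) = 2 \<and>
         (\<forall>n::nat. n \<ge> 2 \<longrightarrow>
            inj_chromatic_index (sierp_verts C4_verts n) (sierp_adj C4_adj n) = 3)"
proof (intro conjI allI impI)
  show "inj_chromatic_index (sierp_verts C4_verts 1) (sierp_adj C4_adj 1) = 2"
    using sierp_edge_colour_inj_edge_coloring[of 1] inj_edge_coloring_sierp_1_ge_2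
    by (auto intro: inj_chromatic_index_eqI)
next
  fix n :: nat assume "n \<ge> 2"
  then show "inj_chromatic_index (sierp_verts C4_verts n) (sierp_adj C4_adj n) = 3"
    using sierp_edge_colour_inj_edge_coloring[of n] inj_edge_coloring_sierp_ge_3
    by (auto intro: inj_chromatic_index_eqI)
qed

end
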